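(* Let $-\omega$ be the automorphism of $\mathcal A_\theta^{alg}$ with $U_1\mapsto U_2$, $U_2\mapsto\lambda^{-1/2}U_1^{-1}U_2$, and let $H^0(\mathcal A_\theta^{alg},{}_{-\omega}\mathcal A_\theta^{alg\ast})$ be the space of formal series $\varphi=\sum\varphi_{n,m}U_1^nU_2^m$ with $((-\omega)\cdot a)\varphi=\varphi a$ for all $a\in\mathcal A_\theta^{alg}$. Then every such $\varphi$ is determined by the coefficient $\varphi_{0,0}$, and $\varphi_{n,m}=\lambda^{-\frac{m^2+n^2}{2}}\varphi_{0,0}$ for all $(n,m)\in\mathbb Z^2$.
   Context: Let $\theta\in\mathbb R\setminus\mathbb Q$, $\lambda=e^{2\pi i\theta}$, $\lambda^s:=e^{2\pi i\theta s}$ for $s\in\mathbb R$. $\mathcal A_\theta^{alg}$ is the complex algebra of finite sums $\sum a_{n,m}U_1^nU_2^m$ with $U_1,U_2$ invertible and $U_2U_1=\lambda U_1U_2$; formal series $\sum_{(n,m)\in\mathbb Z^2}\varphi_{n,m}U_1^nU_2^m$ with arbitrary coefficients form an $\mathcal A_\theta^{alg}$-bimodule via left/right multiplication. The automorphism $-\omega$ is the action of $\begin{pmatrix}0&-1\\1&1\end{pmatrix}\in SL(2,\mathbb Z)$, of order $6$. *)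

theory Defs
  imports Complex_Main
begin

definition lam :: "real \<Rightarrow> real \<Rightarrow> complex" where
  "lam \<theta> s = exp (2 * of_real pi * \<i> * of_real (\<theta> * s))"

text \<open>Formal series sum phi(n,m) U1^n U2^m are represented by their coefficient
  functions int \<times> int \<Rightarrow> complex; elements of A_theta^alg are those with finite support.\<close>
definition fsupp :: "(int \<times> int \<Rightarrow> complex) \<Rightarrow> (int \<times> int) set" where
  "fsupp a = {k. a k \<noteq> 0}"

definition is_alg :: "(int \<times> int \<Rightarrow> complex) \<Rightarrow> bool" where
  "is_alg a \<longleftrightarrow> finite (fsupp a)"

text \<open>Normal-ordered monomials multiply by
  U1^p U2^q * U1^c U2^d = lambda^(q c) U1^(p+c) U2^(q+d), from U2 U1 = lambda U1 U2.\<close>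
definition lmult :: "real \<Rightarrow> (int \<times> int \<Rightarrow> complex) \<Rightarrow> (int \<times> int \<Rightarrow> complex) \<Rightarrow> (int \<times> int \<Rightarrow> complex)" where
  "lmult \<theta> a \<phi> = (\<lambda>(n, m). \<Sum>(p, q)\<in>fsupp a. a (p, q) * \<phi> (n - p, m - q) * lam \<theta> (of_int (q * (n - p))))"

definition rmult :: "real \<Rightarrow> (int \<times> int \<Rightarrow> complex) \<Rightarrow> (int \<times> int \<Rightarrow> complex) \<Rightarrow> (int \<times> int \<Rightarrow> complex)" where
  "rmult \<theta> \<phi> a = (\<lambda>(n, m). \<Sum>(c, d)\<in>fsupp a. \<phi> (n - c, m - d) * a (c, d) * lam \<theta> (of_int ((m - d) * c)))"

definition mono :: "int \<Rightarrow> int \<Rightarrow> (int \<times> int \<Rightarrow> complex)" where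
  "mono n m = (\<lambda>k. if k = (n, m) then 1 else 0)"

definition npow :: "real \<Rightarrow> (int \<times> int \<Rightarrow> complex) \<Rightarrow> nat \<Rightarrow> (int \<times> int \<Rightarrow> complex)" where
  "npow \<theta> x k = (lmult \<theta> x ^^ k) (mono 0 0)"

definition zpow :: "real \<Rightarrow> (int \<times> int \<Rightarrow> complex) \<Rightarrow> (int \<times> int \<Rightarrow> complex) \<Rightarrow> int \<Rightarrow> (int \<times> int \<Rightarrow> complex)" where
  "zpow \<theta> x xi k = (if 0 \<le> k then npow \<theta> x (nat k) else npow \<theta> xi (nat (- k)))"

text \<open>Images of the generators under -omega and their inverses:
  U1 \<mapsto> U2, U2 \<mapsto> lambda^(-1/2) U1^(-1) U2 (inverse lambda^(1/2) U2^(-1) U1).\<close>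
definition W1 :: "(int \<times> int \<Rightarrow> complex)" where "W1 = mono 0 1"
definition W1i :: "(int \<times> int \<Rightarrow> complex)" where "W1i = mono 0 (-1)"
definition W2 :: "real \<Rightarrow> (int \<times> int \<Rightarrow> complex)" where
  "W2 \<theta> = (\<lambda>k. lam \<theta> (-1/2) * mono (-1) 1 k)"
definition W2i :: "real \<Rightarrow> (int \<times> int \<Rightarrow> complex)" where
  "W2i \<theta> = (\<lambda>k. lam \<theta> (1/2) * lmult \<theta> (mono 0 (-1)) (mono 1 0) k)"

definition minus_omega :: "real \<Rightarrow> (int \<times> int \<Rightarrow> complex) \<Rightarrow> (int \<times> int \<Rightarrow> complex)" where
  "minus_omega \<theta> a = (\<lambda>k. \<Sum>(n, m)\<in>fsupp a.
      a (n, m) * lmult \<theta> (zpow \<theta> W1 W1i n) (zpow \<theta> (W2 \<theta>) (W2i \<theta>) m) k)"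

end

theory Submission
  imports Defs
begin

text \<open>Testing the invariance condition on the two generators alone gives the
  recurrences \<open>\<phi>(n,m) = \<lambda>^(n+1/2) \<phi>(n+1,m)\<close> and \<open>\<phi>(n,m) = \<lambda>^(m+1/2) \<phi>(n,m+1)\<close>.
  Since \<open>(n+1)\<^sup>2/2 - n\<^sup>2/2 = n + 1/2\<close>, the Gaussian gauge \<open>\<lambda>^((m\<^sup>2+n\<^sup>2)/2) \<phi>(n,m)\<close>
  is invariant under both unit shifts of \<open>\<int>\<^sup>2\<close>, hence constant.\<close>

lemma lam_add: "lam t s * lam t u = lam t (s + u)"
  unfolding lam_def by (simp add: exp_add[symmetric] algebra_simps)

lemma lam_zero [simp]: "lam t 0 = 1"
  unfolding lam_def by simp

lemma lam_nonzero [simp]: "lam t s \<noteq> 0"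
  unfolding lam_def by simp

lemma fsupp_mono [simp]: "fsupp (mono p q) = {(p, q)}"
  unfolding fsupp_def mono_def by auto

lemma is_alg_mono: "is_alg (mono p q)"
  unfolding is_alg_def by simp

lemma lmult_mono: "lmult t (mono p q) f (n, m) = f (n - p, m - q) * lam t (of_int (q * (n - p)))"
  unfolding lmult_def fsupp_mono by (simp add: mono_def)

lemma rmult_mono: "rmult t f (mono c d) (n, m) = f (n - c, m - d) * lam t (of_int ((m - d) * c))"
  unfolding rmult_def fsupp_mono by (simp add: mono_def)

lemma lmult_mono_0_0 [simp]: "lmult t (mono 0 0) f = f"
  by (rule ext, clarify) (simp add: lmult_mono)

lemma fsupp_W2: "fsupp (W2 t) = {(-1, 1)}"
  unfolding fsupp_def W2_def mono_def by auto

lemma lmult_W2: "lmult t (W2 t) f (n, m) = lam t (-1/2) * f (n + 1, m - 1) * lam t (of_int (n + 1))"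
  unfolding lmult_def fsupp_W2 by (simp add: W2_def mono_def)

lemma minus_omega_U1: "minus_omega t (mono 1 0) = mono 0 1"
proof -
  have "lmult t (mono 0 1) (mono 0 0) = mono 0 1"
    by (rule ext, clarify, subst lmult_mono) (auto simp: mono_def)
  then show ?thesis
    unfolding minus_omega_def fsupp_mono
    by (simp add: mono_def[of 1 0] zpow_def npow_def W1_def)
qed

lemma minus_omega_U2: "minus_omega t (mono 0 1) = W2 t"
proof -
  have "lmult t (W2 t) (mono 0 0) = W2 t"
    by (rule ext, clarify, subst lmult_W2) (auto simp: mono_def W2_def)
  then show ?thesis
    unfolding minus_omega_def fsupp_mono
    by (simp add: mono_def[of 0 1] zpow_def npow_def)
qed

lemma shift_invariant_int_const:
  fixes g :: "int \<Rightarrow> 'a"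
  assumes "\<And>k. g (k + 1) = g k"
  shows "g k = g 0"
proof (induction k rule: int_induct[where k = 0])
  case (step2 i)
  then show ?case using assms[of "i - 1"] by simp
qed (use assms in simp_all)

lemma twisted_invariant_recurrences:
  assumes inv: "\<forall>a. is_alg a \<longrightarrow> lmult t (minus_omega t a) \<phi> = rmult t \<phi> a"
  shows "\<phi> (n, m) = lam t (of_int n + 1/2) * \<phi> (n + 1, m)"
    and "\<phi> (n, m) = lam t (of_int m + 1/2) * \<phi> (n, m + 1)"
proof -
  have U1: "lmult t (mono 0 1) \<phi> = rmult t \<phi> (mono 1 0)"
    using inv is_alg_mono minus_omega_U1 by metis
  have U2: "lmult t (W2 t) \<phi> = rmult t \<phi> (mono 0 1)"
    using inv is_alg_mono minus_omega_U2 by metis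
  have fst_step: "\<phi> (n, m) = lam t (-1/2) * lam t (of_int (n + 1)) * \<phi> (n + 1, m)"
    using fun_cong[OF U2, of "(n, m + 1)"] by (simp add: lmult_W2 rmult_mono mult_ac)
  also have "\<dots> = lam t (of_int n + 1/2) * \<phi> (n + 1, m)"
    by (simp add: lam_add add_ac)
  finally show "\<phi> (n, m) = lam t (of_int n + 1/2) * \<phi> (n + 1, m)" .
  have "\<phi> (n + 1, m) * lam t (of_int (n + 1)) = \<phi> (n, m + 1) * lam t (of_int (m + 1))"
    using fun_cong[OF U1, of "(n + 1, m + 1)"] by (simp add: lmult_mono rmult_mono)
  with fst_step have "\<phi> (n, m) = lam t (-1/2) * lam t (of_int (m + 1)) * \<phi> (n, m + 1)"
    by (simp add: mult_ac)
  also have "\<dots> = lam t (of_int m + 1/2) * \<phi> (n, m + 1)"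
    by (simp add: lam_add add_ac)
  finally show "\<phi> (n, m) = lam t (of_int m + 1/2) * \<phi> (n, m + 1)" .
qed

lemma gaussian_gauge_shift:
  "lam t (of_int (k^2 + j^2) / 2) * lam t (of_int k + 1/2) = lam t (of_int ((k + 1)^2 + j^2) / 2)"
  unfolding lam_add by (simp add: power2_eq_square algebra_simps add_divide_distrib)

lemma gaussian_recurrence_solution:
  fixes \<phi> :: "int \<times> int \<Rightarrow> complex"
  assumes rec1: "\<And>n m. \<phi> (n, m) = lam t (of_int n + 1/2) * \<phi> (n + 1, m)"
    and rec2: "\<And>n m. \<phi> (n, m) = lam t (of_int m + 1/2) * \<phi> (n, m + 1)"
  shows "\<phi> (n, m) = lam t (- (of_int (m^2 + n^2)) / 2) * \<phi> (0, 0)"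
proof -
  define \<psi> where "\<psi> n m = lam t (of_int (m^2 + n^2) / 2) * \<phi> (n, m)" for n m
  have "\<psi> n m = \<psi> (n + 1) m" for n m
    using gaussian_gauge_shift[of t n m] rec1[of n m] by (simp add: \<psi>_def add.commute mult.assoc[symmetric])
  moreover have "\<psi> n m = \<psi> n (m + 1)" for n m
    using gaussian_gauge_shift[of t m n] rec2[of n m] by (simp add: \<psi>_def mult.assoc[symmetric])
  ultimately have "\<psi> n m = \<psi> 0 0"
    using shift_invariant_int_const[of "\<lambda>n. \<psi> n m"] shift_invariant_int_const[of "\<psi> 0"] by metis
  then have "\<phi> (0, 0) = lam t (of_int (m^2 + n^2) / 2) * \<phi> (n, m)"
    by (simp add: \<psi>_def)
  then show ?thesis
    by (simp add: mult.assoc[symmetric] lam_add diff_divide_distrib[symmetric] add_divide_distrib[symmetric])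
qed

theorem mainTheorem8:
  fixes \<theta> :: real and \<phi> :: "int \<times> int \<Rightarrow> complex"
  assumes "\<theta> \<notin> \<rat>"
    and "\<forall>a. is_alg a \<longrightarrow> lmult \<theta> (minus_omega \<theta> a) \<phi> = rmult \<theta> \<phi> a"
  shows "\<forall>n m. \<phi> (n, m) = lam \<theta> (- (of_int (m^2 + n^2)) / 2) * \<phi> (0, 0)"
  using gaussian_recurrence_solution twisted_invariant_recurrences[OF assms(2)] by blast

end
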